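(* In the risk-aversion-shock setting, fix $i\in\{1,\dots,N\}$ with $\bar p_{ii}=1$ and $r(G_i)<1$, and let $x_i^*\in[1,\infty)^M$ be the unique fixed point of $F_i$. If $c\in\mathcal C$ satisfies $c(w,z_{ij})/w\ge x_i^*(\tilde z_j)^{-1/\gamma_i}$ for all $w>0$ and all $j\in\{1,\dots,M\}$, then $Tc(w,z_{ij})/w\ge x_i^*(\tilde z_j)^{-1/\gamma_i}$ for all $w>0$ and all $j\in\{1,\dots,M\}$.
   Context: Risk-aversion-shock setting. $\mathsf Z=\bar{\mathsf Z}\times\tilde{\mathsf Z}$ with $\bar{\mathsf Z}=\{\bar z_1,\dots,\bar z_N\}$, $\tilde{\mathsf Z}=\{\tilde z_1,\dots,\tilde z_M\}$; $Z_t=(\bar Z_t,\tilde Z_t)$ where $\{\bar Z_t\}$, $\{\tilde Z_t\}$ are independent Markov chains with transition matrices $\bar P=(\bar p_{ij})$ and $\tilde P=(\tilde p_{jk})$, so $\{Z_t\}$ has transition matrix $P=\bar P\otimes\tilde P$. Write $z_{ij}=(\bar z_i,\tilde z_j)$. $\{\epsilon_t\}_{t\ge1}$ i.i.d. with distribution $\pi$, independent of $\{Z_t\}$; for nonnegative measurable $\beta,R,Y$, $\beta_t=\beta(Z_{t-1},Z_t,\epsilon_t)$, $R_t=R(Z_{t-1},Z_t,\epsilon_t)$, $Y_t=Y(Z_{t-1},Z_t,\epsilon_t)$. Utility: $u(c,z_{ij})=c^{1-\gamma_i}/(1-\gamma_i)$ if $\gamma_i\ne1$ and $\log c$ if $\gamma_i=1$,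 where $0<\gamma_1<\dots<\gamma_N$; $u'(c,z)$ is the derivative in $c$. $\mathbb E_z$: expectation given $Z_0=z$; under $\mathbb E_z$, $\hat Z=Z_1$, $\hat\beta=\beta(z,\hat Z,\epsilon_1)$, $\hat R=R(z,\hat Z,\epsilon_1)$, $\hat Y=Y(z,\hat Z,\epsilon_1)$. Assumption 2 holds: (a) $\mathbb E_zu'(\hat Y,\hat Z)<\infty$ and $\mathbb E_z\hat\beta\hat Ru'(\hat Y,\hat Z)<\infty$ for all $z$; (b) $r(K(1))<1$ ($r$ = spectral radius), $K_{z\hat z}(\theta)=P(z,\hat z)\int\beta(z,\hat z,\epsilon)R(z,\hat z,\epsilon)^\theta\pi(d\epsilon)$. $S_0=(0,\infty)\times\mathsf Z$; $\mathcal C$: continuous $c:S_0\to\mathbb R_+$, increasing in $w$, $0<c(w,z)\le w$, $\sup_{S_0}|u'(c(w,z),z)-u'(w,z)|<\infty$. $T$: $Tc(w,z)$ is the unique $\xi\in(0,w]$ with $u'(\xi,z)=\max\{\mathbb E_z\hat\beta\hat Ru'(c(\hat R(w-\xi)+\hat Y,\hat Z),\hat Z),u'(w,z)\}$. For each $i$, $Q_i(j,k)=\int\beta(z_{ij},z_{ik},\epsilon)R(z_{ij},z_{ik},\epsilon)^{1-\gamma_i}\pi(d\epsilon)$, $G_i:=\bar p_{ii}(\tilde P\circ Q_i)$ ($\circ$ = entrywise product), and $F_i:[1,\infty)^M\to[1,\infty)^M$, $(F_ix)(\tilde z_j)=\big(1+(G_ix)(\tilde z_j)^{1/\gamma_i}\big)^{\gamma_i}$.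 *)

theory Defs
  imports "HOL-Probability.Probability" "Jordan_Normal_Form.Spectral_Radius"
begin

text \<open>States: z_{ij} is represented by the pair (i,j) with i < N, j < M (0-based).\<close>

definition states :: "nat \<Rightarrow> nat \<Rightarrow> (nat \<times> nat) set" where
  "states N M = {(i, j). i < N \<and> j < M}"

definition stochastic :: "nat \<Rightarrow> (nat \<Rightarrow> nat \<Rightarrow> real) \<Rightarrow> bool" where
  "stochastic n P \<longleftrightarrow> (\<forall>a<n. (\<forall>b<n. P a b \<ge> 0) \<and> (\<Sum>b<n. P a b) = 1)"

definition Ptrans :: "(nat \<Rightarrow> nat \<Rightarrow> real) \<Rightarrow> (nat \<Rightarrow> nat \<Rightarrow> real) \<Rightarrow> nat \<times> nat \<Rightarrow> nat \<times> nat \<Rightarrow> real" where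
  "Ptrans Pb Pt z z' = Pb (fst z) (fst z') * Pt (snd z) (snd z')"

definition epow :: "real \<Rightarrow> real \<Rightarrow> ennreal" where
  "epow x \<theta> = (if x > 0 then ennreal (x powr \<theta>)
                else if \<theta> > 0 then 0 else if \<theta> = 0 then 1 else \<infinity>)"

definition uprime :: "(nat \<Rightarrow> real) \<Rightarrow> real \<Rightarrow> nat \<times> nat \<Rightarrow> ennreal" where
  "uprime \<gamma> c z = epow c (- \<gamma> (fst z))"

text \<open>Conditional expectation E_z of f(Zhat, eps_1) given Z_0 = z.\<close>
definition Ez :: "nat \<Rightarrow> nat \<Rightarrow> (nat \<Rightarrow> nat \<Rightarrow> real) \<Rightarrow> (nat \<Rightarrow> nat \<Rightarrow> real)
    \<Rightarrow> 'e measure \<Rightarrow> nat \<times> nat \<Rightarrow> (nat \<times> nat \<Rightarrow> 'e \<Rightarrow> ennreal) \<Rightarrow> ennreal" where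
  "Ez N M Pb Pt \<pi> z f = (\<Sum>z'\<in>states N M. ennreal (Ptrans Pb Pt z z') * (\<integral>\<^sup>+ e. f z' e \<partial>\<pi>))"

definition Kmat :: "nat \<Rightarrow> nat \<Rightarrow> (nat \<Rightarrow> nat \<Rightarrow> real) \<Rightarrow> (nat \<Rightarrow> nat \<Rightarrow> real) \<Rightarrow> 'e measure
    \<Rightarrow> (nat \<times> nat \<Rightarrow> nat \<times> nat \<Rightarrow> 'e \<Rightarrow> real) \<Rightarrow> (nat \<times> nat \<Rightarrow> nat \<times> nat \<Rightarrow> 'e \<Rightarrow> real)
    \<Rightarrow> real \<Rightarrow> nat \<times> nat \<Rightarrow> nat \<times> nat \<Rightarrow> ennreal" where
  "Kmat N M Pb Pt \<pi> \<beta> R \<theta> z z' =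
     ennreal (Ptrans Pb Pt z z') * (\<integral>\<^sup>+ e. ennreal (\<beta> z z' e) * epow (R z z' e) \<theta> \<partial>\<pi>)"

definition rho :: "nat \<Rightarrow> (nat \<Rightarrow> nat \<Rightarrow> real) \<Rightarrow> real" where
  "rho n A = spectral_radius (mat n n (\<lambda>(a, b). complex_of_real (A a b)))"

definition idx_state :: "nat \<Rightarrow> nat \<Rightarrow> nat \<times> nat" where
  "idx_state M a = (a div M, a mod M)"

definition specrad_lt1_states :: "nat \<Rightarrow> nat \<Rightarrow> (nat \<times> nat \<Rightarrow> nat \<times> nat \<Rightarrow> ennreal) \<Rightarrow> bool" where
  "specrad_lt1_states N M K \<longleftrightarrow>
     (\<forall>z\<in>states N M. \<forall>z'\<in>states N M. K z z' < \<infinity>) \<and>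
     rho (N * M) (\<lambda>a b. enn2real (K (idx_state M a) (idx_state M b))) < 1"

definition Qmat :: "(nat \<Rightarrow> real) \<Rightarrow> 'e measure \<Rightarrow> (nat \<times> nat \<Rightarrow> nat \<times> nat \<Rightarrow> 'e \<Rightarrow> real)
    \<Rightarrow> (nat \<times> nat \<Rightarrow> nat \<times> nat \<Rightarrow> 'e \<Rightarrow> real) \<Rightarrow> nat \<Rightarrow> nat \<Rightarrow> nat \<Rightarrow> ennreal" where
  "Qmat \<gamma> \<pi> \<beta> R i j k =
     (\<integral>\<^sup>+ e. ennreal (\<beta> (i, j) (i, k) e) * epow (R (i, j) (i, k) e) (1 - \<gamma> i) \<partial>\<pi>)"

definition Gmat :: "(nat \<Rightarrow> real) \<Rightarrow> (nat \<Rightarrow> nat \<Rightarrow> real) \<Rightarrow> (nat \<Rightarrow> nat \<Rightarrow> real) \<Rightarrow> 'e measure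
    \<Rightarrow> (nat \<times> nat \<Rightarrow> nat \<times> nat \<Rightarrow> 'e \<Rightarrow> real) \<Rightarrow> (nat \<times> nat \<Rightarrow> nat \<times> nat \<Rightarrow> 'e \<Rightarrow> real)
    \<Rightarrow> nat \<Rightarrow> nat \<Rightarrow> nat \<Rightarrow> ennreal" where
  "Gmat \<gamma> Pb Pt \<pi> \<beta> R i j k = ennreal (Pb i i * Pt j k) * Qmat \<gamma> \<pi> \<beta> R i j k"

definition specrad_lt1 :: "nat \<Rightarrow> (nat \<Rightarrow> nat \<Rightarrow> ennreal) \<Rightarrow> bool" where
  "specrad_lt1 M G \<longleftrightarrow> (\<forall>j<M. \<forall>k<M. G j k < \<infinity>) \<and> rho M (\<lambda>j k. enn2real (G j k)) < 1"

definition Fmap :: "nat \<Rightarrow> real \<Rightarrow> (nat \<Rightarrow> nat \<Rightarrow> ennreal) \<Rightarrow> (nat \<Rightarrow> real) \<Rightarrow> nat \<Rightarrow> real" where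
  "Fmap M g G x j = (1 + (\<Sum>k<M. enn2real (G j k) * x k) powr (1 / g)) powr g"

definition policy_class :: "nat \<Rightarrow> nat \<Rightarrow> (nat \<Rightarrow> real) \<Rightarrow> (real \<Rightarrow> nat \<times> nat \<Rightarrow> real) \<Rightarrow> bool" where
  "policy_class N M \<gamma> c \<longleftrightarrow>
     (\<forall>z\<in>states N M. continuous_on {0<..} (\<lambda>w. c w z) \<and> mono_on {0<..} (\<lambda>w. c w z)) \<and>
     (\<forall>z\<in>states N M. \<forall>w>0. 0 < c w z \<and> c w z \<le> w) \<and>
     (\<exists>B. \<forall>z\<in>states N M. \<forall>w>0.
        \<bar>c w z powr (- \<gamma> (fst z)) - w powr (- \<gamma> (fst z))\<bar> \<le> B)"

definition Top :: "nat \<Rightarrow> nat \<Rightarrow> (nat \<Rightarrow> real) \<Rightarrow> (nat \<Rightarrow> nat \<Rightarrow> real) \<Rightarrow> (nat \<Rightarrow> nat \<Rightarrow> real)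
    \<Rightarrow> 'e measure \<Rightarrow> (nat \<times> nat \<Rightarrow> nat \<times> nat \<Rightarrow> 'e \<Rightarrow> real) \<Rightarrow> (nat \<times> nat \<Rightarrow> nat \<times> nat \<Rightarrow> 'e \<Rightarrow> real)
    \<Rightarrow> (nat \<times> nat \<Rightarrow> nat \<times> nat \<Rightarrow> 'e \<Rightarrow> real) \<Rightarrow> (real \<Rightarrow> nat \<times> nat \<Rightarrow> real) \<Rightarrow> real \<Rightarrow> nat \<times> nat \<Rightarrow> real" where
  "Top N M \<gamma> Pb Pt \<pi> \<beta> R Y c w z =
     (THE \<xi>. 0 < \<xi> \<and> \<xi> \<le> w \<and>
        uprime \<gamma> \<xi> z =
          max (Ez N M Pb Pt \<pi> z (\<lambda>z' e. ennreal (\<beta> z z' e) * ennreal (R z z' e) *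
                    uprime \<gamma> (c (R z z' e * (w - \<xi>) + Y z z' e) z') z'))
              (uprime \<gamma> w z))"

end

theory Submission
  imports Defs
begin

text \<open>Since \<open>Pb i i = 1\<close>, the next state stays in
  row \<open>i\<close>, where the marginal utility is \<open>\<xi> powr -\<gamma> i\<close>. Consumption \<open>Tc(w, z)\<close> is a root
  \<open>\<xi>\<close> of \<open>\<xi> powr -\<gamma> i = max (E \<xi>) (w powr -\<gamma> i)\<close>, where \<open>E \<xi>\<close> is the expected discounted
  marginal utility of saving \<open>w - \<xi>\<close>. Because \<open>c\<close> is increasing, \<open>E\<close> is nondecreasing; by
  dominated convergence (using the bound defining the class \<open>C\<close> and Assumption 2) it is finite
  and continuous, so the root exists and is unique. At an interior root the hypothesis
  \<open>c(t, z\<^sub>i\<^sub>k) \<ge> t x\<^sub>k powr (-1/\<gamma> i)\<close> gives \<open>\<xi> powr -\<gamma> i = E \<xi> \<le> (w - \<xi>) powr -\<gamma> i * S\<close>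
  with \<open>S = (G\<^sub>i x\<^sup>*)\<^sub>j\<close>, i.e. \<open>\<xi> \<ge> w / (1 + S powr (1/\<gamma> i))\<close>, which equals
  \<open>w x\<^sup>*\<^sub>j powr (-1/\<gamma> i)\<close> by the fixed-point equation.\<close>

lemma epow_pos: "x > 0 \<Longrightarrow> epow x \<theta> = ennreal (x powr \<theta>)"
  by (simp add: epow_def)

lemma borel_measurable_epow [measurable]:
  assumes [measurable]: "f \<in> borel_measurable M"
  shows "(\<lambda>e. epow (f e) \<theta>) \<in> borel_measurable M"
  unfolding epow_def by measurable

lemma epow_neg_antimono:
  assumes "0 < x" "x \<le> x'" "0 \<le> g"
  shows "epow x' (-g) \<le> epow x (-g)"
  using assms by (simp add: epow_def ennreal_leI powr_mono2')

lemma borel_measurable_continuous_on_pos_compose: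
  fixes f :: "real \<Rightarrow> real"
  assumes "continuous_on {0<..} f" "u \<in> borel_measurable M" "\<And>e. e \<in> space M \<Longrightarrow> u e \<ge> 0"
  shows "(\<lambda>e. f (u e)) \<in> borel_measurable M"
proof -
  let ?f = "\<lambda>t. if t \<in> {0<..} then f t else f 0"
  have "?f \<in> borel_measurable borel"
    by (rule borel_measurable_continuous_on_if) (auto intro: assms continuous_on_const)
  then have "(\<lambda>e. ?f (u e)) \<in> borel_measurable M"
    using assms(2) by (rule measurable_compose[rotated])
  then show ?thesis
    by (rule measurable_cong[THEN iffD1, rotated]) (use assms(3) in force)
qed

lemma continuous_on_enn2real_finite:
  assumes "continuous_on S f" "\<And>x. x \<in> S \<Longrightarrow> f x < \<infinity>"
  shows "continuous_on S (\<lambda>x. enn2real (f x))"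
  unfolding continuous_on_def
proof
  fix x assume "x \<in> S"
  then have "(f \<longlongrightarrow> ennreal (enn2real (f x))) (at x within S)"
    using assms by (simp add: continuous_on_def less_top)
  then show "((\<lambda>x. enn2real (f x)) \<longlongrightarrow> enn2real (f x)) (at x within S)"
    by (rule tendsto_enn2real) simp
qed

lemma epow_policy_le_dominant:
  fixes cf :: "real \<Rightarrow> real"
  assumes "g > 0" "r \<ge> 0" "y \<ge> 0" "s \<ge> 0" "B \<ge> 0"
    and pos: "\<And>t. t > 0 \<Longrightarrow> cf t > 0"
    and bnd: "\<And>t. t > 0 \<Longrightarrow> cf t powr (-g) \<le> t powr (-g) + B"
  shows "epow (cf (r * s + y)) (-g) \<le> epow y (-g) + ennreal B"
proof (cases "y > 0")
  case True
  define a where "a = r * s + y"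
  have "0 \<le> r * s" using assms by simp
  then have "y \<le> a" "0 < a" using True by (auto simp: a_def)
  have "cf a powr -g \<le> a powr -g + B" using bnd \<open>0 < a\<close> .
  also have "a powr -g \<le> y powr -g" by (rule powr_mono2') (use assms True \<open>y \<le> a\<close> in auto)
  finally show ?thesis
    using pos[OF \<open>0 < a\<close>] True \<open>B \<ge> 0\<close>
    by (simp add: a_def epow_pos ennreal_plus[symmetric] ennreal_leI del: ennreal_plus)
next
  case False
  with assms show ?thesis by (simp add: epow_def)
qed

lemma epow_policy_le_powr:
  fixes cf :: "real \<Rightarrow> real"
  assumes g: "g > 0" and x: "x > 0" and nonneg: "b \<ge> 0" "r \<ge> 0" "y \<ge> 0" and s: "s > 0"
    and cb: "\<And>t. t > 0 \<Longrightarrow> t * x powr (-1/g) \<le> cf t"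
  shows "ennreal b * ennreal r * epow (cf (r * s + y)) (-g)
         \<le> ennreal (x * s powr -g) * (ennreal b * epow r (1 - g))"
proof (cases "r = 0")
  case True
  then show ?thesis by simp
next
  case False
  then have r: "r > 0" using nonneg by simp
  define m where "m = r * s * x powr (-1/g)"
  have m: "0 < m" using r s x by (simp add: m_def)
  have "m \<le> (r * s + y) * x powr (-1/g)"
    unfolding m_def using nonneg by (intro mult_right_mono) auto
  also have "\<dots> \<le> cf (r * s + y)" using cb r s nonneg by (simp add: add_pos_nonneg)
  finally have m_le: "m \<le> cf (r * s + y)" .
  have "cf (r * s + y) powr -g \<le> m powr -g" by (rule powr_mono2') (use g m m_le in auto)
  also have "m powr -g = r powr -g * s powr -g * x"
    using r s x g by (simp add: m_def powr_mult powr_powr)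
  finally have "b * r * cf (r * s + y) powr -g \<le> b * r * (r powr -g * s powr -g * x)"
    using nonneg r by (simp add: mult_left_mono)
  also have "\<dots> = x * s powr -g * (b * r powr (1 - g))"
    using r by (simp add: powr_diff powr_minus divide_inverse algebra_simps)
  finally show ?thesis
    using m m_le r nonneg x
    by (simp add: epow_pos ennreal_mult[symmetric] ennreal_leI)
qed

lemma continuous_on_euler_integrand:
  fixes cf :: "real \<Rightarrow> real"
  assumes nonneg: "b \<ge> 0" "r \<ge> 0" "y \<ge> 0" and income: "b > 0 \<longrightarrow> r > 0 \<longrightarrow> y > 0"
    and cont: "continuous_on {0<..} cf" and pos: "\<And>t. t > 0 \<Longrightarrow> cf t > 0"
  shows "continuous_on {0..} (\<lambda>s. ennreal b * ennreal r * epow (cf (r * s + y)) \<theta>)"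
proof (cases "b > 0 \<and> r > 0")
  case False
  with nonneg have "b = 0 \<or> r = 0" by auto
  then show ?thesis by auto
next
  case True
  have arg_pos: "r * s + y > 0" if "s \<ge> 0" for s
    using True income that by (simp add: add_nonneg_pos)
  have "continuous_on {0..} (\<lambda>s. cf (r * s + y))"
    by (rule continuous_on_compose2[OF cont]) (auto intro!: continuous_intros arg_pos)
  moreover have "cf (r * s + y) > 0" if "s \<in> {0..}" for s
    using that by (simp add: arg_pos pos)
  ultimately have "continuous_on {0..} (\<lambda>s. ennreal b * ennreal r * ennreal (cf (r * s + y) powr \<theta>))"
    by (intro ennreal_continuous_on_cmult continuous_on_ennreal continuous_on_powr continuous_on_const)
       (force simp: ennreal_mult_less_top)+
  then show ?thesis
    by (rule continuous_on_cong[THEN iffD1, rotated 2]) (simp_all add: epow_pos pos arg_pos)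
qed

definition euler_term :: "'e measure \<Rightarrow> ('e \<Rightarrow> real) \<Rightarrow> ('e \<Rightarrow> real) \<Rightarrow> ('e \<Rightarrow> real)
    \<Rightarrow> (real \<Rightarrow> real) \<Rightarrow> real \<Rightarrow> real \<Rightarrow> ennreal" where
  "euler_term \<pi> b r y cf g s =
     (\<integral>\<^sup>+e. ennreal (b e) * ennreal (r e) * epow (cf (r e * s + y e)) (-g) \<partial>\<pi>)"

context
  fixes \<pi> :: "'e measure" and b r y :: "'e \<Rightarrow> real" and g :: real
  assumes meas [measurable]: "b \<in> borel_measurable \<pi>" "r \<in> borel_measurable \<pi>" "y \<in> borel_measurable \<pi>"
    and nonneg: "\<And>e. b e \<ge> 0" "\<And>e. r e \<ge> 0" "\<And>e. y e \<ge> 0"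
    and g: "g > 0"
begin

lemma nn_integral_euler_dominant_finite:
  assumes "(\<integral>\<^sup>+e. ennreal (b e) * ennreal (r e) * epow (y e) (-g) \<partial>\<pi>) < \<infinity>"
    and "(\<integral>\<^sup>+e. ennreal (b e) * ennreal (r e) \<partial>\<pi>) < \<infinity>"
  shows "(\<integral>\<^sup>+e. ennreal (b e) * ennreal (r e) * (epow (y e) (-g) + ennreal B) \<partial>\<pi>) < \<infinity>"
proof -
  have "(\<integral>\<^sup>+e. ennreal (b e) * ennreal (r e) * (epow (y e) (-g) + ennreal B) \<partial>\<pi>)
      = (\<integral>\<^sup>+e. ennreal (b e) * ennreal (r e) * epow (y e) (-g) \<partial>\<pi>)
        + ennreal B * (\<integral>\<^sup>+e. ennreal (b e) * ennreal (r e) \<partial>\<pi>)"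
    by (simp add: distrib_left mult.commute nn_integral_add nn_integral_cmult)
  then show ?thesis using assms by (simp add: ennreal_mult_less_top)
qed

text \<open>Finiteness of the integral forces positive income wherever the gross return is positive,
  which keeps the argument of the policy away from \<open>0\<close>.\<close>

lemma AE_income_pos:
  assumes "(\<integral>\<^sup>+e. ennreal (b e) * ennreal (r e) * epow (y e) (-g) \<partial>\<pi>) < \<infinity>"
  shows "AE e in \<pi>. b e > 0 \<longrightarrow> r e > 0 \<longrightarrow> y e > 0"
proof -
  have "AE e in \<pi>. ennreal (b e) * ennreal (r e) * epow (y e) (-g) \<noteq> \<infinity>"
    by (rule nn_integral_PInf_AE) (use assms in auto)
  then show ?thesis
    by eventually_elim (use nonneg g in \<open>auto simp: epow_def ennreal_mult_eq_top_iff split: if_splits\<close>)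
qed

lemma euler_term_antimono:
  assumes fin: "(\<integral>\<^sup>+e. ennreal (b e) * ennreal (r e) * epow (y e) (-g) \<partial>\<pi>) < \<infinity>"
    and mono: "mono_on {0<..} cf" and pos: "\<And>t. t > 0 \<Longrightarrow> cf t > 0"
    and s: "0 \<le> s1" "s1 \<le> s2"
  shows "euler_term \<pi> b r y cf g s2 \<le> euler_term \<pi> b r y cf g s1"
  unfolding euler_term_def
proof (rule nn_integral_mono_AE)
  show "AE e in \<pi>. ennreal (b e) * ennreal (r e) * epow (cf (r e * s2 + y e)) (-g)
      \<le> ennreal (b e) * ennreal (r e) * epow (cf (r e * s1 + y e)) (-g)"
    using AE_income_pos[OF fin]
  proof eventually_elim
    case (elim e)
    show ?case
    proof (cases "b e > 0 \<and> r e > 0")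
      case False
      then have "b e = 0 \<or> r e = 0" using nonneg[of e] by auto
      then show ?thesis by auto
    next
      case True
      then have a1: "0 < r e * s1 + y e" using elim s by (simp add: add_nonneg_pos)
      have "r e * s1 + y e \<le> r e * s2 + y e" using True s by (simp add: mult_left_mono)
      then have "cf (r e * s1 + y e) \<le> cf (r e * s2 + y e)"
        using a1 by (intro mono_onD[OF mono]) auto
      then have "epow (cf (r e * s2 + y e)) (-g) \<le> epow (cf (r e * s1 + y e)) (-g)"
        using pos[OF a1] g by (intro epow_neg_antimono) auto
      then show ?thesis by (intro mult_left_mono) auto
    qed
  qed
qed

lemma euler_term_finite:
  assumes fin: "(\<integral>\<^sup>+e. ennreal (b e) * ennreal (r e) * epow (y e) (-g) \<partial>\<pi>) < \<infinity>"
      "(\<integral>\<^sup>+e. ennreal (b e) * ennreal (r e) \<partial>\<pi>) < \<infinity>"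
    and B: "B \<ge> 0" and pos: "\<And>t. t > 0 \<Longrightarrow> cf t > 0"
    and bnd: "\<And>t. t > 0 \<Longrightarrow> cf t powr (-g) \<le> t powr (-g) + B"
    and s: "s \<ge> 0"
  shows "euler_term \<pi> b r y cf g s < \<infinity>"
proof -
  have "euler_term \<pi> b r y cf g s
      \<le> (\<integral>\<^sup>+e. ennreal (b e) * ennreal (r e) * (epow (y e) (-g) + ennreal B) \<partial>\<pi>)"
    unfolding euler_term_def
    by (intro nn_integral_mono mult_left_mono epow_policy_le_dominant[OF g _ _ s B pos bnd])
       (auto simp: nonneg)
  also have "\<dots> < \<infinity>" by (rule nn_integral_euler_dominant_finite[OF fin])
  finally show ?thesis .
qed

lemma continuous_on_euler_term:
  assumes fin: "(\<integral>\<^sup>+e. ennreal (b e) * ennreal (r e) * epow (y e) (-g) \<partial>\<pi>) < \<infinity>"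
      "(\<integral>\<^sup>+e. ennreal (b e) * ennreal (r e) \<partial>\<pi>) < \<infinity>"
    and B: "B \<ge> 0" and cont: "continuous_on {0<..} cf" and pos: "\<And>t. t > 0 \<Longrightarrow> cf t > 0"
    and bnd: "\<And>t. t > 0 \<Longrightarrow> cf t powr (-g) \<le> t powr (-g) + B"
  shows "continuous_on {0..} (euler_term \<pi> b r y cf g)"
proof (rule continuous_on_sequentiallyI)
  fix u :: "nat \<Rightarrow> real" and a
  assume u: "\<forall>n. u n \<in> {0..}" and a: "a \<in> {0..}" and lim: "u \<longlonglongrightarrow> a"
  have cf_meas: "(\<lambda>e. cf (r e * s + y e)) \<in> borel_measurable \<pi>" if "s \<ge> 0" for s
    by (rule borel_measurable_continuous_on_pos_compose[OF cont]) (use that nonneg in auto)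
  have [measurable]: "(\<lambda>e. cf (r e * u n + y e)) \<in> borel_measurable \<pi>"
    "(\<lambda>e. cf (r e * a + y e)) \<in> borel_measurable \<pi>" for n
    using u a by (auto intro: cf_meas)
  show "(\<lambda>n. euler_term \<pi> b r y cf g (u n)) \<longlonglongrightarrow> euler_term \<pi> b r y cf g a"
    unfolding euler_term_def
  proof (rule nn_integral_dominated_convergence
      [where w = "\<lambda>e. ennreal (b e) * ennreal (r e) * (epow (y e) (-g) + ennreal B)"])
    show "(\<lambda>e. ennreal (b e) * ennreal (r e) * epow (cf (r e * u n + y e)) (-g)) \<in> borel_measurable \<pi>"
      for n by measurable
    show "(\<lambda>e. ennreal (b e) * ennreal (r e) * epow (cf (r e * a + y e)) (-g)) \<in> borel_measurable \<pi>"
      by measurable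
    show "(\<lambda>e. ennreal (b e) * ennreal (r e) * (epow (y e) (-g) + ennreal B)) \<in> borel_measurable \<pi>"
      by measurable
    show "AE e in \<pi>. ennreal (b e) * ennreal (r e) * epow (cf (r e * u n + y e)) (-g)
        \<le> ennreal (b e) * ennreal (r e) * (epow (y e) (-g) + ennreal B)" for n
      using u by (intro AE_I2 mult_left_mono epow_policy_le_dominant[OF g _ _ _ B pos bnd])
        (auto simp: nonneg)
    show "(\<integral>\<^sup>+e. ennreal (b e) * ennreal (r e) * (epow (y e) (-g) + ennreal B) \<partial>\<pi>) < \<infinity>"
      by (rule nn_integral_euler_dominant_finite[OF fin])
    show "AE e in \<pi>. (\<lambda>n. ennreal (b e) * ennreal (r e) * epow (cf (r e * u n + y e)) (-g))
        \<longlonglongrightarrow> ennreal (b e) * ennreal (r e) * epow (cf (r e * a + y e)) (-g)"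
      using AE_income_pos[OF fin(1)]
    proof (rule AE_mp, intro AE_I2 impI)
      fix e assume "b e > 0 \<longrightarrow> r e > 0 \<longrightarrow> y e > 0"
      then show "(\<lambda>n. ennreal (b e) * ennreal (r e) * epow (cf (r e * u n + y e)) (-g))
          \<longlonglongrightarrow> ennreal (b e) * ennreal (r e) * epow (cf (r e * a + y e)) (-g)"
        by (intro continuous_on_tendsto_compose
            [OF continuous_on_euler_integrand[OF nonneg _ cont pos] lim a])
           (use u in simp_all)
    qed
  qed
qed

lemma euler_term_le_powr:
  assumes x: "x > 0" and cb: "\<And>t. t > 0 \<Longrightarrow> t * x powr (-1/g) \<le> cf t" and s: "s > 0"
  shows "euler_term \<pi> b r y cf g s
      \<le> ennreal (x * s powr -g) * (\<integral>\<^sup>+e. ennreal (b e) * epow (r e) (1 - g) \<partial>\<pi>)"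
proof -
  have "euler_term \<pi> b r y cf g s
      \<le> (\<integral>\<^sup>+e. ennreal (x * s powr -g) * (ennreal (b e) * epow (r e) (1 - g)) \<partial>\<pi>)"
    unfolding euler_term_def
    by (intro nn_integral_mono epow_policy_le_powr[OF g x _ _ _ s cb]) (auto simp: nonneg)
  also have "\<dots> = ennreal (x * s powr -g) * (\<integral>\<^sup>+e. ennreal (b e) * epow (r e) (1 - g) \<partial>\<pi>)"
    by (rule nn_integral_cmult) measurable
  finally show ?thesis .
qed

end

definition is_euler_root :: "real \<Rightarrow> (real \<Rightarrow> ennreal) \<Rightarrow> real \<Rightarrow> real \<Rightarrow> bool" where
  "is_euler_root g E w \<xi> \<longleftrightarrow>
     0 < \<xi> \<and> \<xi> \<le> w \<and> ennreal (\<xi> powr -g) = max (E \<xi>) (ennreal (w powr -g))"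

lemma ennreal_powr_neg_strict_antimono:
  "g > 0 \<Longrightarrow> 0 < a \<Longrightarrow> a < b \<Longrightarrow> ennreal (b powr -g) < ennreal (a powr -g)"
  by (intro ennreal_lessI) (auto intro: powr_less_mono2_neg)

lemma euler_root_interior:
  assumes "is_euler_root g E w \<xi>" "g > 0" "\<xi> < w"
  shows "E \<xi> = ennreal (\<xi> powr -g)"
proof -
  have "ennreal (w powr -g) < ennreal (\<xi> powr -g)"
    using assms by (intro ennreal_powr_neg_strict_antimono) (auto simp: is_euler_root_def)
  then show ?thesis using assms(1) by (auto simp: is_euler_root_def max_def split: if_splits)
qed

lemma euler_root_unique:
  assumes g: "g > 0" and mono: "mono_on {0<..w} E"
    and roots: "is_euler_root g E w \<xi>1" "is_euler_root g E w \<xi>2"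
  shows "\<xi>1 = \<xi>2"
proof -
  have False if a: "is_euler_root g E w a" and b: "is_euler_root g E w b" and "a < b" for a b
  proof -
    from a b have "0 < a" "b \<le> w" by (auto simp: is_euler_root_def)
    have "ennreal (a powr -g) = E a" using euler_root_interior[OF a g] \<open>a < b\<close> \<open>b \<le> w\<close> by simp
    also have "E a \<le> E b" using \<open>0 < a\<close> \<open>a < b\<close> \<open>b \<le> w\<close> by (intro mono_onD[OF mono]) auto
    also have "E b \<le> ennreal (b powr -g)" using b by (simp add: is_euler_root_def)
    also have "\<dots> < ennreal (a powr -g)"
      by (rule ennreal_powr_neg_strict_antimono[OF g \<open>0 < a\<close> \<open>a < b\<close>])
    finally show False by simp
  qed
  then show ?thesis using roots by (metis linorder_neqE)
qed

lemma euler_root_exists: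
  assumes g: "g > 0" and w: "w > 0" and mono: "mono_on {0<..w} E"
    and cont: "continuous_on {0<..w} E" and fin: "E w < \<infinity>"
  shows "\<exists>\<xi>. is_euler_root g E w \<xi>"
proof (cases "E w \<le> ennreal (w powr -g)")
  case True
  then show ?thesis using w by (intro exI[of _ w]) (simp add: is_euler_root_def max_absorb2)
next
  case False
  define C where "C = enn2real (E w)"
  \<comment> \<open>\<open>\<xi>0\<close> is so small that \<open>\<xi>0 powr -g > C \<ge> E \<xi>0\<close>; the root lies in \<open>[\<xi>0, w]\<close>.\<close>
  define \<xi>0 where "\<xi>0 = min w ((C + 1) powr (-1/g))"
  define h where "h \<xi> = enn2real (E \<xi>) - \<xi> powr -g" for \<xi>
  have "C \<ge> 0" by (simp add: C_def)
  have \<xi>0: "0 < \<xi>0" "\<xi>0 \<le> w" using w \<open>C \<ge> 0\<close> by (auto simp: \<xi>0_def)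
  have E_le: "E \<xi> \<le> E w" if "\<xi> \<in> {0<..w}" for \<xi>
    using that w by (intro mono_onD[OF mono]) auto
  then have E_fin: "E \<xi> < \<infinity>" if "\<xi> \<in> {0<..w}" for \<xi>
    using that fin by (meson le_less_trans)
  have "enn2real (E \<xi>0) \<le> C"
    unfolding C_def using \<xi>0 fin E_le by (intro enn2real_mono) auto
  also have "C < ((C + 1) powr (-1/g)) powr -g"
    using g \<open>C \<ge> 0\<close> by (simp add: powr_powr)
  also have "\<dots> \<le> \<xi>0 powr -g"
    by (rule powr_mono2') (use g \<xi>0 in \<open>auto simp: \<xi>0_def\<close>)
  finally have "h \<xi>0 \<le> 0" by (simp add: h_def)
  moreover have "0 \<le> h w"
  proof -
    have "E w = ennreal C" using fin by (simp add: C_def less_top)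
    with False have "w powr -g < C" by (simp add: not_le ennreal_less_iff)
    then show ?thesis by (simp add: h_def C_def)
  qed
  moreover have "continuous_on {\<xi>0..w} h"
    unfolding h_def using \<xi>0
    by (intro continuous_intros continuous_on_enn2real_finite continuous_on_subset[OF cont] E_fin)
       auto
  ultimately obtain \<xi> where \<xi>: "\<xi>0 \<le> \<xi>" "\<xi> \<le> w" "h \<xi> = 0"
    using IVT'[of h \<xi>0 0 w] \<xi>0 by auto
  then have E\<xi>: "E \<xi> = ennreal (\<xi> powr -g)"
    using \<xi>0 E_fin[of \<xi>] by (simp add: h_def ennreal_enn2real_if less_top)
  with False \<xi> have "0 < \<xi>" "\<xi> < w" using \<xi>0 by (auto simp: order.order_iff_strict)
  then have "ennreal (w powr -g) < E \<xi>"
    unfolding E\<xi> by (rule ennreal_powr_neg_strict_antimono[OF g])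
  then show ?thesis
    using \<open>0 < \<xi>\<close> \<open>\<xi> < w\<close> E\<xi> by (intro exI[of _ \<xi>]) (simp add: is_euler_root_def)
qed

lemma euler_root_ge:
  assumes root: "is_euler_root g E w \<xi>" and g: "g > 0" and S: "S \<ge> 0"
    and bound: "\<xi> < w \<Longrightarrow> E \<xi> \<le> ennreal ((w - \<xi>) powr -g * S)"
  shows "w / (1 + S powr (1/g)) \<le> \<xi>"
proof -
  have denom: "1 + S powr (1/g) > 0" by (simp add: add_pos_nonneg)
  show ?thesis
  proof (cases "\<xi> < w")
    case False
    with root have "\<xi> = w" "w > 0" by (auto simp: is_euler_root_def)
    then show ?thesis using denom by (simp add: divide_le_eq)
  next
    case True
    with root have \<xi>: "0 < \<xi>" by (auto simp: is_euler_root_def)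
    have "ennreal (\<xi> powr -g) \<le> ennreal ((w - \<xi>) powr -g * S)"
      using bound True euler_root_interior[OF root g] by simp
    then have "\<xi> powr -g \<le> (w - \<xi>) powr -g * S"
      using S by (simp add: ennreal_le_iff)
    then have "((w - \<xi>) / \<xi>) powr g \<le> S"
      using \<xi> True by (simp add: powr_divide powr_minus divide_simps mult.commute)
    then have "(w - \<xi>) / \<xi> \<le> S powr (1/g)"
      using powr_mono2[of "1/g" "((w - \<xi>) / \<xi>) powr g" S] g \<xi> True by (simp add: powr_powr)
    then show ?thesis
      using \<xi> denom by (simp add: divide_le_eq algebra_simps)
  qed
qed

lemma states_eq_Times: "states N M = {..<N} \<times> {..<M}"
  by (auto simp: states_def)

lemma Ez_absorbing_row:
  assumes Pb: "stochastic N Pb" and i: "i < N" "Pb i i = 1"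
  shows "Ez N M Pb Pt \<pi> (i, j) f = (\<Sum>k<M. ennreal (Pt j k) * (\<integral>\<^sup>+e. f (i, k) e \<partial>\<pi>))"
proof -
  have row: "Pb i a = 0" if "a < N" "a \<noteq> i" for a
  proof -
    have "(\<Sum>b\<in>{..<N}. Pb i b) = Pb i i + (\<Sum>b\<in>{..<N} - {i}. Pb i b)"
      using i by (simp add: sum.remove)
    then have "(\<Sum>b\<in>{..<N} - {i}. Pb i b) = 0" using Pb i by (simp add: stochastic_def)
    then show ?thesis
      using Pb i that by (subst (asm) sum_nonneg_eq_0_iff) (auto simp: stochastic_def)
  qed
  have "Ez N M Pb Pt \<pi> (i, j) f
      = (\<Sum>a<N. \<Sum>k<M. ennreal (Pb i a * Pt j k) * (\<integral>\<^sup>+e. f (a, k) e \<partial>\<pi>))"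
    by (simp add: Ez_def Ptrans_def states_eq_Times sum.cartesian_product prod.case_eq_if)
  also have "\<dots> = (\<Sum>k<M. ennreal (Pb i i * Pt j k) * (\<integral>\<^sup>+e. f (i, k) e \<partial>\<pi>))"
    using i row by (subst sum.remove[of _ i]) (auto intro!: sum.neutral)
  finally show ?thesis using i by simp
qed

lemma Fmap_fixed_point_powr:
  assumes "g > 0" "Fmap M g G x j = x j"
  shows "x j powr (-1/g) = 1 / (1 + (\<Sum>k<M. enn2real (G j k) * x k) powr (1/g))"
proof -
  define a where "a = 1 + (\<Sum>k<M. enn2real (G j k) * x k) powr (1/g)"
  have "a > 0" by (simp add: a_def add_pos_nonneg)
  moreover have "x j = a powr g" using assms(2) by (simp add: Fmap_def a_def)
  ultimately show ?thesis
    using assms(1) by (simp add: powr_powr powr_minus_divide flip: a_def)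
qed

text \<open>Assumption 2 is used only through finiteness; \<open>K1_finite\<close> is the entrywise part of
  \<open>r(K(1)) < 1\<close>.\<close>

locale consumption_model =
  fixes N M :: nat and Pb Pt :: "nat \<Rightarrow> nat \<Rightarrow> real" and \<pi> :: "'e measure"
    and \<beta> R Y :: "nat \<times> nat \<Rightarrow> nat \<times> nat \<Rightarrow> 'e \<Rightarrow> real" and \<gamma> :: "nat \<Rightarrow> real"
    and c :: "real \<Rightarrow> nat \<times> nat \<Rightarrow> real"
  assumes Pb: "stochastic N Pb" and Pt: "stochastic M Pt"
    and meas [measurable]: "\<And>z z'. \<beta> z z' \<in> borel_measurable \<pi>"
      "\<And>z z'. R z z' \<in> borel_measurable \<pi>" "\<And>z z'. Y z z' \<in> borel_measurable \<pi>"
    and nonneg: "\<And>z z' e. \<beta> z z' e \<ge> 0" "\<And>z z' e. R z z' e \<ge> 0" "\<And>z z' e. Y z z' e \<ge> 0"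
    and \<gamma>_pos: "\<And>a. a < N \<Longrightarrow> \<gamma> a > 0"
    and euler_finite: "\<And>z. z \<in> states N M \<Longrightarrow>
      Ez N M Pb Pt \<pi> z (\<lambda>z' e. ennreal (\<beta> z z' e) * ennreal (R z z' e) * uprime \<gamma> (Y z z' e) z') < \<infinity>"
    and K1_finite: "\<And>z z'. z \<in> states N M \<Longrightarrow> z' \<in> states N M \<Longrightarrow>
      Kmat N M Pb Pt \<pi> \<beta> R 1 z z' < \<infinity>"
    and policy: "policy_class N M \<gamma> c"
begin

abbreviation euler_summand :: "nat \<times> nat \<Rightarrow> nat \<times> nat \<Rightarrow> real \<Rightarrow> ennreal" where
  "euler_summand z z' \<equiv> euler_term \<pi> (\<beta> z z') (R z z') (Y z z') (\<lambda>t. c t z') (\<gamma> (fst z'))"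

definition euler_rhs :: "nat \<times> nat \<Rightarrow> real \<Rightarrow> real \<Rightarrow> ennreal" where
  "euler_rhs z w \<xi> = Ez N M Pb Pt \<pi> z (\<lambda>z' e. ennreal (\<beta> z z' e) * ennreal (R z z' e) *
     uprime \<gamma> (c (R z z' e * (w - \<xi>) + Y z z' e) z') z')"

lemma euler_rhs_eq_sum:
  "euler_rhs z w \<xi> = (\<Sum>z'\<in>states N M. ennreal (Ptrans Pb Pt z z') * euler_summand z z' (w - \<xi>))"
  by (simp add: euler_rhs_def Ez_def euler_term_def uprime_def)

lemma Ptrans_nonneg: "z \<in> states N M \<Longrightarrow> z' \<in> states N M \<Longrightarrow> Ptrans Pb Pt z z' \<ge> 0"
  using Pb Pt by (auto simp: Ptrans_def stochastic_def states_def)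

lemma successor_integrals_finite:
  assumes z: "z \<in> states N M" "z' \<in> states N M" and p: "Ptrans Pb Pt z z' > 0"
  shows "(\<integral>\<^sup>+e. ennreal (\<beta> z z' e) * ennreal (R z z' e) * epow (Y z z' e) (-\<gamma> (fst z')) \<partial>\<pi>) < \<infinity>"
    and "(\<integral>\<^sup>+e. ennreal (\<beta> z z' e) * ennreal (R z z' e) \<partial>\<pi>) < \<infinity>"
proof -
  have "ennreal (Ptrans Pb Pt z z') *
      (\<integral>\<^sup>+e. ennreal (\<beta> z z' e) * ennreal (R z z' e) * epow (Y z z' e) (-\<gamma> (fst z')) \<partial>\<pi>) < \<infinity>"
    using euler_finite[OF z(1)] z(2) by (cases z') (simp add: Ez_def uprime_def states_def)
  then show "(\<integral>\<^sup>+e. ennreal (\<beta> z z' e) * ennreal (R z z' e) * epow (Y z z' e) (-\<gamma> (fst z')) \<partial>\<pi>) < \<infinity>"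
    using p by (auto simp: ennreal_mult_less_top)
  have "epow (R z z' e) 1 = ennreal (R z z' e)" for e
    using nonneg(2)[of z z' e] by (auto simp: epow_def)
  then show "(\<integral>\<^sup>+e. ennreal (\<beta> z z' e) * ennreal (R z z' e) \<partial>\<pi>) < \<infinity>"
    using K1_finite[OF z] p by (auto simp: Kmat_def ennreal_mult_less_top)
qed

lemma policy_bound:
  obtains B where "B \<ge> 0"
    "\<And>z t. z \<in> states N M \<Longrightarrow> t > 0 \<Longrightarrow> c t z powr -\<gamma> (fst z) \<le> t powr -\<gamma> (fst z) + B"
proof -
  obtain B where B: "\<And>z t. z \<in> states N M \<Longrightarrow> t > 0 \<Longrightarrow>
      \<bar>c t z powr -\<gamma> (fst z) - t powr -\<gamma> (fst z)\<bar> \<le> B"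
    using policy unfolding policy_class_def by blast
  show ?thesis
  proof (rule that[of "max B 0"])
    fix z and t :: real assume "z \<in> states N M" "t > 0"
    then have "c t z powr -\<gamma> (fst z) - t powr -\<gamma> (fst z) \<le> B"
      using B by (simp add: abs_le_iff)
    then show "c t z powr -\<gamma> (fst z) \<le> t powr -\<gamma> (fst z) + max B 0" by linarith
  qed simp
qed

lemma euler_summand_regular:
  assumes z: "z \<in> states N M" "z' \<in> states N M" and p: "Ptrans Pb Pt z z' > 0"
  shows "\<And>s1 s2. 0 \<le> s1 \<Longrightarrow> s1 \<le> s2 \<Longrightarrow> euler_summand z z' s2 \<le> euler_summand z z' s1"
    and "continuous_on {0..} (euler_summand z z')"
    and "\<And>s. 0 \<le> s \<Longrightarrow> euler_summand z z' s < \<infinity>"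
proof -
  obtain B where B: "B \<ge> 0"
    and bnd: "\<And>t. t > 0 \<Longrightarrow> c t z' powr -\<gamma> (fst z') \<le> t powr -\<gamma> (fst z') + B"
    using policy_bound z(2) by metis
  have g: "\<gamma> (fst z') > 0" using z(2) \<gamma>_pos by (auto simp: states_def)
  have cont: "continuous_on {0<..} (\<lambda>t. c t z')" and mono: "mono_on {0<..} (\<lambda>t. c t z')"
    and pos: "\<And>t. t > 0 \<Longrightarrow> c t z' > 0"
    using policy z(2) by (auto simp: policy_class_def)
  note fin = successor_integrals_finite[OF z p]
  show "euler_summand z z' s2 \<le> euler_summand z z' s1" if "0 \<le> s1" "s1 \<le> s2" for s1 s2
    by (rule euler_term_antimono[OF meas nonneg g fin(1) mono pos that])
  show "continuous_on {0..} (euler_summand z z')"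
    by (rule continuous_on_euler_term[OF meas nonneg g fin B cont pos bnd])
  show "euler_summand z z' s < \<infinity>" if "0 \<le> s" for s
    by (rule euler_term_finite[OF meas nonneg g fin B pos bnd that])
qed

lemma euler_rhs_regular:
  assumes z: "z \<in> states N M"
  shows "mono_on {0<..w} (euler_rhs z w)" and "continuous_on {0<..w} (euler_rhs z w)"
    and "euler_rhs z w w < \<infinity>"
proof -
  have p_cases: "Ptrans Pb Pt z z' = 0 \<or> Ptrans Pb Pt z z' > 0" if "z' \<in> states N M" for z'
    using Ptrans_nonneg[OF z that] by auto
  show "mono_on {0<..w} (euler_rhs z w)"
  proof (rule mono_onI)
    fix \<xi>1 \<xi>2 assume \<xi>: "\<xi>1 \<in> {0<..w}" "\<xi>2 \<in> {0<..w}" "\<xi>1 \<le> \<xi>2"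
    have "ennreal (Ptrans Pb Pt z z') * euler_summand z z' (w - \<xi>1)
        \<le> ennreal (Ptrans Pb Pt z z') * euler_summand z z' (w - \<xi>2)" if z': "z' \<in> states N M" for z'
      using p_cases[OF z'] euler_summand_regular(1)[OF z z', of "w - \<xi>2" "w - \<xi>1"] \<xi>
      by (auto intro: mult_left_mono)
    then show "euler_rhs z w \<xi>1 \<le> euler_rhs z w \<xi>2"
      unfolding euler_rhs_eq_sum by (rule sum_mono)
  qed
  have "continuous_on {0<..w} (\<lambda>\<xi>. ennreal (Ptrans Pb Pt z z') * euler_summand z z' (w - \<xi>))"
    if z': "z' \<in> states N M" for z'
  proof (cases "Ptrans Pb Pt z z' = 0")
    case False
    with p_cases[OF z'] have p: "Ptrans Pb Pt z z' > 0" by simp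
    show ?thesis
      by (intro ennreal_continuous_on_cmult continuous_on_compose2[OF euler_summand_regular(2)[OF z z' p]])
         (auto intro!: continuous_intros)
  qed simp
  then show "continuous_on {0<..w} (euler_rhs z w)"
    unfolding euler_rhs_eq_sum by (intro continuous_on_sum) auto
  have "ennreal (Ptrans Pb Pt z z') * euler_summand z z' 0 < \<infinity>" if z': "z' \<in> states N M" for z'
    using p_cases[OF z'] euler_summand_regular(3)[OF z z', of 0] by (auto simp: ennreal_mult_less_top)
  then show "euler_rhs z w w < \<infinity>"
    unfolding euler_rhs_eq_sum by (simp add: states_eq_Times)
qed

lemma Top_is_euler_root:
  assumes z: "z \<in> states N M" and w: "w > 0"
  shows "is_euler_root (\<gamma> (fst z)) (euler_rhs z w) w (Top N M \<gamma> Pb Pt \<pi> \<beta> R Y c w z)"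
proof -
  have g: "\<gamma> (fst z) > 0" using z \<gamma>_pos by (auto simp: states_def)
  have "Top N M \<gamma> Pb Pt \<pi> \<beta> R Y c w z = (THE \<xi>. is_euler_root (\<gamma> (fst z)) (euler_rhs z w) w \<xi>)"
    unfolding Top_def is_euler_root_def
    by (intro arg_cong[where f = The] ext) (use w in \<open>auto simp: epow_pos euler_rhs_def uprime_def\<close>)
  moreover have "\<exists>!\<xi>. is_euler_root (\<gamma> (fst z)) (euler_rhs z w) w \<xi>"
    using euler_root_exists[OF g w euler_rhs_regular[OF z]]
      euler_root_unique[OF g euler_rhs_regular(1)[OF z]] by blast
  ultimately show ?thesis by (simp add: theI')
qed

lemma euler_rhs_row_le:
  assumes i: "i < N" "Pb i i = 1" and j: "j < M"
    and x: "\<And>k. k < M \<Longrightarrow> x k > 0"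
    and cb: "\<And>k t. k < M \<Longrightarrow> t > 0 \<Longrightarrow> t * x k powr (-1 / \<gamma> i) \<le> c t (i, k)"
    and G_finite: "\<And>k. k < M \<Longrightarrow> Gmat \<gamma> Pb Pt \<pi> \<beta> R i j k < \<infinity>"
    and \<xi>: "\<xi> < w"
  shows "euler_rhs (i, j) w \<xi>
      \<le> ennreal ((w - \<xi>) powr -\<gamma> i * (\<Sum>k<M. enn2real (Gmat \<gamma> Pb Pt \<pi> \<beta> R i j k) * x k))"
proof -
  let ?G = "Gmat \<gamma> Pb Pt \<pi> \<beta> R i j"
  let ?Q = "\<lambda>k. \<integral>\<^sup>+e. ennreal (\<beta> (i, j) (i, k) e) * epow (R (i, j) (i, k) e) (1 - \<gamma> i) \<partial>\<pi>"
  have g: "\<gamma> i > 0" using \<gamma>_pos i by simp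
  have "euler_rhs (i, j) w \<xi> = (\<Sum>k<M. ennreal (Pt j k) * euler_summand (i, j) (i, k) (w - \<xi>))"
    unfolding euler_rhs_def Ez_absorbing_row[OF Pb i] by (simp add: euler_term_def uprime_def)
  also have "\<dots> \<le> (\<Sum>k<M. ennreal (Pt j k) * (ennreal (x k * (w - \<xi>) powr -\<gamma> i) * ?Q k))"
  proof (intro sum_mono mult_left_mono)
    fix k assume "k \<in> {..<M}"
    then show "euler_summand (i, j) (i, k) (w - \<xi>) \<le> ennreal (x k * (w - \<xi>) powr -\<gamma> i) * ?Q k"
      using euler_term_le_powr[OF meas nonneg g x, of k "\<lambda>t. c t (i, k)" "w - \<xi>"] cb \<xi> by simp
  qed simp
  also have "\<dots> = (\<Sum>k<M. ennreal ((w - \<xi>) powr -\<gamma> i * (enn2real (?G k) * x k)))"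
  proof (rule sum.cong[OF refl])
    fix k assume k: "k \<in> {..<M}"
    have "ennreal (enn2real (?G k)) = ?G k" using G_finite k by (simp add: less_top)
    also have "\<dots> = ennreal (Pt j k) * ?Q k" using i by (simp add: Gmat_def Qmat_def)
    finally have "ennreal (Pt j k) * (ennreal (x k * (w - \<xi>) powr -\<gamma> i) * ?Q k)
        = ennreal (x k * (w - \<xi>) powr -\<gamma> i) * ennreal (enn2real (?G k))"
      by (simp add: ac_simps)
    also have "\<dots> = ennreal (x k * (w - \<xi>) powr -\<gamma> i * enn2real (?G k))"
      using x k by (intro ennreal_mult'[symmetric]) (simp add: less_imp_le)
    also have "\<dots> = ennreal ((w - \<xi>) powr -\<gamma> i * (enn2real (?G k) * x k))"
      by (simp add: ac_simps)
    finally show "ennreal (Pt j k) * (ennreal (x k * (w - \<xi>) powr -\<gamma> i) * ?Q k)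
        = ennreal ((w - \<xi>) powr -\<gamma> i * (enn2real (?G k) * x k))" .
  qed
  also have "\<dots> = ennreal ((w - \<xi>) powr -\<gamma> i * (\<Sum>k<M. enn2real (?G k) * x k))"
  proof -
    have "0 \<le> x k" if "k < M" for k using x[OF that] by simp
    then show ?thesis by (subst sum_ennreal) (auto simp: sum_distrib_left)
  qed
  finally show ?thesis .
qed

end

theorem lemmaD1:
  fixes N M :: nat
    and Pb Pt :: "nat \<Rightarrow> nat \<Rightarrow> real"
    and \<pi> :: "'e measure"
    and \<beta> R Y :: "nat \<times> nat \<Rightarrow> nat \<times> nat \<Rightarrow> 'e \<Rightarrow> real"
    and \<gamma> :: "nat \<Rightarrow> real"
    and i :: nat
    and xstar :: "nat \<Rightarrow> real"
    and c :: "real \<Rightarrow> nat \<times> nat \<Rightarrow> real"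
  assumes NM: "N \<ge> 1" "M \<ge> 1"
    and Pb: "stochastic N Pb" and Pt: "stochastic M Pt"
    and prob: "prob_space \<pi>"
    and meas: "\<And>z z'. (\<lambda>e. \<beta> z z' e) \<in> borel_measurable \<pi>"
              "\<And>z z'. (\<lambda>e. R z z' e) \<in> borel_measurable \<pi>"
              "\<And>z z'. (\<lambda>e. Y z z' e) \<in> borel_measurable \<pi>"
    and nonneg: "\<And>z z' e. \<beta> z z' e \<ge> 0" "\<And>z z' e. R z z' e \<ge> 0" "\<And>z z' e. Y z z' e \<ge> 0"
    and gpos: "\<gamma> 0 > 0"
    and gmono: "\<And>a b. a < b \<Longrightarrow> b < N \<Longrightarrow> \<gamma> a < \<gamma> b"
    and A2a: "\<And>z. z \<in> states N M \<Longrightarrow>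
                 Ez N M Pb Pt \<pi> z (\<lambda>z' e. uprime \<gamma> (Y z z' e) z') < \<infinity>"
             "\<And>z. z \<in> states N M \<Longrightarrow>
                 Ez N M Pb Pt \<pi> z (\<lambda>z' e. ennreal (\<beta> z z' e) * ennreal (R z z' e) *
                                         uprime \<gamma> (Y z z' e) z') < \<infinity>"
    and A2b: "specrad_lt1_states N M (Kmat N M Pb Pt \<pi> \<beta> R 1)"
    and i: "i < N" and pii: "Pb i i = 1"
    and rG: "specrad_lt1 M (Gmat \<gamma> Pb Pt \<pi> \<beta> R i)"
    and xfix: "\<forall>j<M. xstar j \<ge> 1"
              "\<forall>j<M. Fmap M (\<gamma> i) (Gmat \<gamma> Pb Pt \<pi> \<beta> R i) xstar j = xstar j"
    and xuniq: "\<And>x. (\<forall>j<M. x j \<ge> 1) \<Longrightarrow>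
                  (\<forall>j<M. Fmap M (\<gamma> i) (Gmat \<gamma> Pb Pt \<pi> \<beta> R i) x j = x j) \<Longrightarrow>
                  (\<forall>j<M. x j = xstar j)"
    and cC: "policy_class N M \<gamma> c"
    and cbound: "\<And>w j. w > 0 \<Longrightarrow> j < M \<Longrightarrow> c w (i, j) / w \<ge> xstar j powr (- 1 / \<gamma> i)"
  shows "\<forall>w>0. \<forall>j<M. Top N M \<gamma> Pb Pt \<pi> \<beta> R Y c w (i, j) / w \<ge> xstar j powr (- 1 / \<gamma> i)"
proof -
  have \<gamma>_pos: "\<gamma> a > 0" if "a < N" for a
    using gpos gmono[of 0 a] that by (cases "a = 0") auto
  interpret consumption_model N M Pb Pt \<pi> \<beta> R Y \<gamma> c
    using Pb Pt meas nonneg \<gamma>_pos A2a(2) A2b cC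
    by unfold_locales (auto simp: specrad_lt1_states_def)
  show ?thesis
  proof (intro allI impI)
    fix w :: real and j assume w: "w > 0" and j: "j < M"
    let ?T = "Top N M \<gamma> Pb Pt \<pi> \<beta> R Y c w (i, j)" and ?G = "Gmat \<gamma> Pb Pt \<pi> \<beta> R i"
    define S where "S = (\<Sum>k<M. enn2real (?G j k) * xstar k)"
    have g: "\<gamma> i > 0" using \<gamma>_pos i .
    have "S \<ge> 0" using xfix(1) by (auto simp: S_def intro!: sum_nonneg)
    have cb: "t * xstar k powr (-1 / \<gamma> i) \<le> c t (i, k)" if "k < M" "t > 0" for k t
      using cbound[OF that(2,1)] that(2) by (simp add: le_divide_eq mult.commute)
    have x_pos: "xstar k > 0" if "k < M" for k
      using xfix(1) that by (auto intro: less_le_trans[OF zero_less_one])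
    have G_finite: "?G j k < \<infinity>" if "k < M" for k
      using rG j that by (simp add: specrad_lt1_def)
    have "(i, j) \<in> states N M" using i j by (simp add: states_def)
    then have root: "is_euler_root (\<gamma> i) (euler_rhs (i, j) w) w ?T"
      using Top_is_euler_root w by fastforce
    have "w / (1 + S powr (1 / \<gamma> i)) \<le> ?T"
      using euler_rhs_row_le[OF i pii j x_pos cb G_finite]
      by (intro euler_root_ge[OF root g \<open>S \<ge> 0\<close>]) (simp add: S_def)
    moreover have "xstar j powr (-1 / \<gamma> i) = 1 / (1 + S powr (1 / \<gamma> i))"
      unfolding S_def using Fmap_fixed_point_powr[OF g] xfix(2) j by blast
    ultimately show "xstar j powr (-1 / \<gamma> i) \<le> ?T / w"
      using w by (simp add: le_divide_eq mult.commute)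
  qed
qed

end
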